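(* Let $d,n,p\ge1$, $a_1,\dots,a_n\in\mathbb{R}^d$, $\lambda_1,\dots,\lambda_n\ge0$, $\tau=r/s$ with $r\ge s\ge1$ integers, $\gcd(r,s)=1$, and let $\mathbf{K}=\{x\in\mathbb{R}^d:g_1(x)\ge0,\dots,g_m(x)\ge0\}$ be a compact basic closed semialgebraic set satisfying the Archimedean property. For each $i$ let $UB_i\ge \max\{\|x-a_i\|_\tau: x\in\mathbf{K}\}$. Then: (i) If $(x_1,\dots,x_p)\in\mathbf{K}^p$ is feasible for (LOCOMF), there exist $(z,u,v,\zeta,w,t,\theta)$ such that $(x,z,u,v,\zeta,w,t,\theta)$ is feasible for (MFOMP$_\lambda$) and $\sum_{\ell}\lambda_\ell\theta_\ell=\sum_i\lambda_i\tilde f_{(i)}(x)$. (ii) Conversely, if $(x,z,u,v,\zeta,w,t,\theta)$ is feasible for (MFOMP$_\lambda$), then $x=(x_1,\dots,x_p)$ is feasible for (LOCOMF). (iii) $\rho_\lambda=\hat\rho_\lambda$. (iv) If $\mathbf{K}$ satisfies Slater's condition (it has a point where all $g_k$ are strictly positive), then the continuous relaxation of (MFOMP$_\lambda$), obtained by replacing $w_{i\ell}\in\{0,1\}$, $z_{ij}\in\{0,1\}$ with $w_{i\ell},z_{ij}\in[0,1]$, has a feasible point at which all inequality constraints hold strictly (Slater's condition).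
   Context: $\|z\|_\tau=(\sum_{k=1}^d|z_k|^\tau)^{1/\tau}$. For $x=(x_1,\dots,x_p)\in(\mathbb{R}^d)^p$ let $\tilde f_i(x)=\min_{j=1,\dots,p}\|x_j-a_i\|_\tau$, and let $\tilde f_{(1)}(x)\ge\dots\ge\tilde f_{(n)}(x)$ be the nonincreasing rearrangement of $(\tilde f_1(x),\dots,\tilde f_n(x))$. Problem (LOCOMF): $\rho_\lambda=\min\{\sum_{i=1}^n\lambda_i\tilde f_{(i)}(x): x_j\in\mathbf{K},\ j=1,\dots,p\}$. Problem (MFOMP$_\lambda$): $\hat\rho_\lambda=\min\sum_{\ell=1}^n\lambda_\ell\theta_\ell$ over $x_j\in\mathbf{K}$ ($x_j=(x_{j1},\dots,x_{jd})$), nonnegative reals $\theta_\ell,t_i,v_{ijk},\zeta_{ijk},u_{ij}$ and binaries $w_{i\ell},z_{ij}\in\{0,1\}$ ($i,\ell=1,\dots,n$; $j=1,\dots,p$; $k=1,\dots,d$), subject to: $t_i\le\theta_\ell+UB_i(1-w_{i\ell})$ for all $i,\ell$; $\theta_\ell\ge\theta_{\ell+1}$ for $\ell=1,\dots,n-1$; $u_{ij}\le t_i+UB_i(1-z_{ij})$ for all $i,j$; $v_{ijk}-x_{jk}+a_{ik}\ge0$ and $v_{ijk}+x_{jk}-a_{ik}\ge0$ for all $i,j,k$; $v_{ijk}^r\le\zeta_{ijk}^su_{ij}^{r-s}$ for all $i,j,k$; $\sum_{k=1}^d\zeta_{ijk}\le u_{ij}$ for all $i,j$; $\sum_{j=1}^pz_{ij}=1$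 for all $i$; $\sum_{i=1}^nw_{i\ell}=1$ for all $\ell$; $\sum_{\ell=1}^nw_{i\ell}=1$ for all $i$. Convention $0^0=1$ when $r=s$. A set $\mathbf{K}=\{g_k\ge0\}$ satisfies the Archimedean property if for some $M>0$, $M-\sum_i x_i^2=\sigma_0+\sum_k\sigma_kg_k$ with $\sigma_0,\sigma_k$ sums of squares of polynomials. *)

theory Defs
  imports "HOL-Analysis.Analysis"
begin

inductive poly_fun :: "(real^'d \<Rightarrow> real) \<Rightarrow> bool" where
  pf_const: "poly_fun (\<lambda>x. c)"
| pf_coord: "poly_fun (\<lambda>x. x $ i)"
| pf_add: "poly_fun f \<Longrightarrow> poly_fun g \<Longrightarrow> poly_fun (\<lambda>x. f x + g x)"
| pf_mult: "poly_fun f \<Longrightarrow> poly_fun g \<Longrightarrow> poly_fun (\<lambda>x. f x * g x)"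

definition sos_fun :: "(real^'d \<Rightarrow> real) \<Rightarrow> bool" where
  "sos_fun f \<longleftrightarrow> (\<exists>qs. (\<forall>q\<in>set qs. poly_fun q) \<and>
      f = (\<lambda>x. sum_list (map (\<lambda>q. (q x)^2) qs)))"

definition semialg_set :: "nat \<Rightarrow> (nat \<Rightarrow> real^'d \<Rightarrow> real) \<Rightarrow> (real^'d) set" where
  "semialg_set m g = {y. \<forall>k<m. g k y \<ge> 0}"

definition archimedean :: "nat \<Rightarrow> (nat \<Rightarrow> real^'d \<Rightarrow> real) \<Rightarrow> bool" where
  "archimedean m g \<longleftrightarrow> (\<exists>M>0. \<exists>\<sigma>. (\<forall>k\<le>m. sos_fun (\<sigma> k)) \<and>
     (\<forall>x. M - (\<Sum>i\<in>UNIV. (x $ i)^2) = \<sigma> m x + (\<Sum>k<m. \<sigma> k x * g k x)))"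
  \<comment> \<open>\<sigma> m plays the role of \<sigma>_0\<close>

definition tau_norm :: "real \<Rightarrow> real^'d \<Rightarrow> real" where
  "tau_norm \<tau> z = (\<Sum>k\<in>UNIV. \<bar>z $ k\<bar> powr \<tau>) powr (1 / \<tau>)"

text \<open>f~_i(x) = min_j ||x_j - a_i||_tau  (indices 0-based: i<n, j<p)\<close>
definition f_tilde :: "real \<Rightarrow> nat \<Rightarrow> (nat \<Rightarrow> real^'d) \<Rightarrow> (nat \<Rightarrow> real^'d) \<Rightarrow> nat \<Rightarrow> real" where
  "f_tilde \<tau> p a x i = Min {tau_norm \<tau> (x j - a i) | j. j < p}"

text \<open>Nonincreasing rearrangement: entry l (0-based) is the (l+1)-th largest.\<close>
definition sorted_desc :: "nat \<Rightarrow> (nat \<Rightarrow> real) \<Rightarrow> real list" where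
  "sorted_desc n f = rev (sort (map f [0..<n]))"

definition locomf_obj ::
  "real \<Rightarrow> nat \<Rightarrow> nat \<Rightarrow> (nat \<Rightarrow> real) \<Rightarrow> (nat \<Rightarrow> real^'d) \<Rightarrow> (nat \<Rightarrow> real^'d) \<Rightarrow> real" where
  "locomf_obj \<tau> n p lam a x = (\<Sum>i<n. lam i * sorted_desc n (f_tilde \<tau> p a x) ! i)"

definition locomf_feasible :: "nat \<Rightarrow> (real^'d) set \<Rightarrow> (nat \<Rightarrow> real^'d) \<Rightarrow> bool" where
  "locomf_feasible p K x \<longleftrightarrow> (\<forall>j<p. x j \<in> K)"

definition rho :: "real \<Rightarrow> nat \<Rightarrow> nat \<Rightarrow> (nat \<Rightarrow> real) \<Rightarrow> (nat \<Rightarrow> real^'d) \<Rightarrow> (real^'d) set \<Rightarrow> real" where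
  "rho \<tau> n p lam a K = Inf {locomf_obj \<tau> n p lam a x | x. locomf_feasible p K x}"

text \<open>Feasibility for (MFOMP_lambda); W = {0,1} for the MINLP, W = {0..1} for the continuous
 relaxation. Indices 0-based.\<close>
definition mfomp_feasible ::
  "real set \<Rightarrow> nat \<Rightarrow> nat \<Rightarrow> nat \<Rightarrow> nat \<Rightarrow> (nat \<Rightarrow> real^'d) \<Rightarrow> (nat \<Rightarrow> real) \<Rightarrow> (real^'d) set \<Rightarrow>
   (nat \<Rightarrow> real^'d) \<Rightarrow> (nat \<Rightarrow> nat \<Rightarrow> real) \<Rightarrow> (nat \<Rightarrow> nat \<Rightarrow> real) \<Rightarrow>
   (nat \<Rightarrow> nat \<Rightarrow> real^'d) \<Rightarrow> (nat \<Rightarrow> nat \<Rightarrow> real^'d) \<Rightarrow> (nat \<Rightarrow> nat \<Rightarrow> real) \<Rightarrow>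
   (nat \<Rightarrow> real) \<Rightarrow> (nat \<Rightarrow> real) \<Rightarrow> bool" where
  "mfomp_feasible W r s n p a UB K x z u v \<zeta> w t \<theta> \<longleftrightarrow>
     (\<forall>j<p. x j \<in> K) \<and>
     (\<forall>l<n. \<theta> l \<ge> 0) \<and> (\<forall>i<n. t i \<ge> 0) \<and>
     (\<forall>i<n. \<forall>j<p. u i j \<ge> 0 \<and> (\<forall>k. v i j $ k \<ge> 0 \<and> \<zeta> i j $ k \<ge> 0)) \<and>
     (\<forall>i<n. \<forall>l<n. w i l \<in> W) \<and> (\<forall>i<n. \<forall>j<p. z i j \<in> W) \<and>
     (\<forall>i<n. \<forall>l<n. t i \<le> \<theta> l + UB i * (1 - w i l)) \<and>
     (\<forall>l. l + 1 < n \<longrightarrow> \<theta> l \<ge> \<theta> (l + 1)) \<and>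
     (\<forall>i<n. \<forall>j<p. u i j \<le> t i + UB i * (1 - z i j)) \<and>
     (\<forall>i<n. \<forall>j<p. \<forall>k. v i j $ k - x j $ k + a i $ k \<ge> 0 \<and> v i j $ k + x j $ k - a i $ k \<ge> 0) \<and>
     (\<forall>i<n. \<forall>j<p. \<forall>k. (v i j $ k) ^ r \<le> (\<zeta> i j $ k) ^ s * (u i j) ^ (r - s)) \<and>
     (\<forall>i<n. \<forall>j<p. (\<Sum>k\<in>UNIV. \<zeta> i j $ k) \<le> u i j) \<and>
     (\<forall>i<n. (\<Sum>j<p. z i j) = 1) \<and>
     (\<forall>l<n. (\<Sum>i<n. w i l) = 1) \<and>
     (\<forall>i<n. (\<Sum>l<n. w i l) = 1)"

definition rho_hat ::
  "nat \<Rightarrow> nat \<Rightarrow> nat \<Rightarrow> nat \<Rightarrow> (nat \<Rightarrow> real) \<Rightarrow> (nat \<Rightarrow> real^'d) \<Rightarrow> (nat \<Rightarrow> real) \<Rightarrow> (real^'d) set \<Rightarrow> real" where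
  "rho_hat r s n p lam a UB K = Inf {(\<Sum>l<n. lam l * \<theta> l) | x z u v \<zeta> w t \<theta>.
      mfomp_feasible {0,1} r s n p a UB K x z u v \<zeta> w t \<theta>}"

text \<open>Slater point of the continuous relaxation: equalities hold, every inequality
 constraint (including x_j in K, i.e. g_k(x_j) \<ge> 0, and nonnegativity of the variables)
 holds strictly.\<close>
definition mfomp_relax_strict ::
  "nat \<Rightarrow> (nat \<Rightarrow> real^'d \<Rightarrow> real) \<Rightarrow> nat \<Rightarrow> nat \<Rightarrow> nat \<Rightarrow> nat \<Rightarrow> (nat \<Rightarrow> real^'d) \<Rightarrow> (nat \<Rightarrow> real) \<Rightarrow>
   (nat \<Rightarrow> real^'d) \<Rightarrow> (nat \<Rightarrow> nat \<Rightarrow> real) \<Rightarrow> (nat \<Rightarrow> nat \<Rightarrow> real) \<Rightarrow>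
   (nat \<Rightarrow> nat \<Rightarrow> real^'d) \<Rightarrow> (nat \<Rightarrow> nat \<Rightarrow> real^'d) \<Rightarrow> (nat \<Rightarrow> nat \<Rightarrow> real) \<Rightarrow>
   (nat \<Rightarrow> real) \<Rightarrow> (nat \<Rightarrow> real) \<Rightarrow> bool" where
  "mfomp_relax_strict m g r s n p a UB x z u v \<zeta> w t \<theta> \<longleftrightarrow>
     (\<forall>j<p. \<forall>k<m. g k (x j) > 0) \<and>
     (\<forall>l<n. \<theta> l > 0) \<and> (\<forall>i<n. t i > 0) \<and>
     (\<forall>i<n. \<forall>j<p. u i j > 0 \<and> (\<forall>k. v i j $ k > 0 \<and> \<zeta> i j $ k > 0)) \<and>
     (\<forall>i<n. \<forall>l<n. 0 < w i l \<and> w i l \<le> 1) \<and> (\<forall>i<n. \<forall>j<p. 0 < z i j \<and> z i j \<le> 1) \<and>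
     (\<forall>i<n. \<forall>l<n. t i < \<theta> l + UB i * (1 - w i l)) \<and>
     (\<forall>l. l + 1 < n \<longrightarrow> \<theta> l > \<theta> (l + 1)) \<and>
     (\<forall>i<n. \<forall>j<p. u i j < t i + UB i * (1 - z i j)) \<and>
     (\<forall>i<n. \<forall>j<p. \<forall>k. v i j $ k - x j $ k + a i $ k > 0 \<and> v i j $ k + x j $ k - a i $ k > 0) \<and>
     (\<forall>i<n. \<forall>j<p. \<forall>k. (v i j $ k) ^ r < (\<zeta> i j $ k) ^ s * (u i j) ^ (r - s)) \<and>
     (\<forall>i<n. \<forall>j<p. (\<Sum>k\<in>UNIV. \<zeta> i j $ k) < u i j) \<and>
     (\<forall>i<n. (\<Sum>j<p. z i j) = 1) \<and>
     (\<forall>l<n. (\<Sum>i<n. w i l) = 1) \<and>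
     (\<forall>i<n. (\<Sum>l<n. w i l) = 1)"

end

theory Submission
  imports Defs "HOL-Combinatorics.Permutations"
begin

text \<open>Given facilities \<open>x\<close> in \<open>K\<close>, assign each \<open>a\<^sub>i\<close> to a nearest facility (\<open>z\<close>), sort the
  distances \<open>f\<^sub>i\<close> by a permutation matrix (\<open>w\<close>) and put \<open>\<theta>\<close> = the sorted values; the
  \<open>\<tau>\<close>-norm bound \<open>\<parallel>x\<^sub>j - a\<^sub>i\<parallel>\<^sub>\<tau> \<le> u\<^sub>i\<^sub>j\<close> is encoded by the polynomial constraints
  \<open>v\<^sup>r \<le> \<zeta>\<^sup>s u\<^sup>r\<^sup>-\<^sup>s\<close>, \<open>\<Sum>\<zeta> \<le> u\<close>, which are \<open>s\<close>-th powers of \<open>v\<^sup>\<tau> \<le> \<zeta> u\<^sup>\<tau>\<^sup>-\<^sup>1\<close>;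
  summed over the coordinates these give \<open>\<parallel>v\<parallel>\<^sub>\<tau>\<^sup>\<tau> \<le> u\<^sup>\<tau>\<close>.
  Conversely, in any feasible point of the mixed-integer program, \<open>t\<^sub>i\<close> dominates the
  distance from \<open>a\<^sub>i\<close> to its assigned facility, \<open>w\<close> is a permutation matrix along which
  \<open>t\<^sub>i \<le> \<theta>\<^sub>l\<close>, and a nonincreasing \<open>\<theta>\<close> dominating a permutation of the \<open>f\<^sub>i\<close> dominates their
  nonincreasing rearrangement; with \<open>\<lambda> \<ge> 0\<close> the objective values compare, so the infima
  coincide.\<close>

lemma sorted_desc_nth_antimono: "l + 1 < n \<Longrightarrow> sorted_desc n f ! (l + 1) \<le> sorted_desc n f ! l"
  unfolding sorted_desc_def by (auto simp: rev_nth intro!: sorted_nth_mono)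

lemma sorted_desc_permutes:
  obtains q where "q permutes {..<n}" "\<And>l. l < n \<Longrightarrow> sorted_desc n f ! l = f (q l)"
proof -
  have "mset (sorted_desc n f) = mset (map f [0..<n])"
    by (simp add: sorted_desc_def)
  then obtain q where q: "q permutes {..<n}" "permute_list q (map f [0..<n]) = sorted_desc n f"
    by (metis mset_eq_permutation length_map length_upt minus_nat.diff_0)
  have "sorted_desc n f ! l = f (q l)" if "l < n" for l
    using permute_list_nth[of q "map f [0..<n]" l] permutes_in_image[OF q(1), of l] q that by simp
  with q(1) show thesis by (rule that)
qed

lemma card_ge_sorted_desc_nth:
  assumes "l < n"
  shows "l + 1 \<le> card {i. i < n \<and> sorted_desc n f ! l \<le> f i}"
proof -
  define xs where "xs = sort (map f [0..<n])"
  define c where "c = sorted_desc n f ! l"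
  have c: "c = xs ! (n - Suc l)"
    using assms by (simp add: c_def sorted_desc_def xs_def rev_nth)
  have "{n - Suc l..<n} \<subseteq> {j. j < length xs \<and> c \<le> xs ! j}"
    using assms by (auto simp: c xs_def intro!: sorted_nth_mono)
  then have "card {n - Suc l..<n} \<le> card {j. j < length xs \<and> c \<le> xs ! j}"
    by (intro card_mono) auto
  also have "\<dots> = length (filter (\<lambda>y. c \<le> y) xs)"
    by (simp add: length_filter_conv_card)
  also have "\<dots> = length (filter (\<lambda>y. c \<le> y) (map f [0..<n]))"
    unfolding xs_def by (metis mset_filter mset_sort size_mset)
  also have "\<dots> = card {i. i < n \<and> c \<le> f i}"
    by (auto simp: length_filter_conv_card intro!: arg_cong[where f=card])
  finally show ?thesis
    using assms by (simp add: c_def)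
qed

lemma sorted_desc_nth_le_if_card_ge:
  assumes "l < n" "S \<subseteq> {..<n}" "n - l \<le> card S"
  obtains i where "i \<in> S" "sorted_desc n f ! l \<le> f i"
proof -
  define T where "T = {i. i < n \<and> sorted_desc n f ! l \<le> f i}"
  have "T \<subseteq> {..<n}"
    by (auto simp: T_def)
  with assms(2) have "card (S \<union> T) \<le> n"
    by (metis card_lessThan card_mono finite_lessThan Un_least)
  moreover have "l + 1 \<le> card T"
    using card_ge_sorted_desc_nth[OF assms(1)] by (simp add: T_def)
  moreover have "finite S" "finite T"
    using assms(2) \<open>T \<subseteq> {..<n}\<close> by (auto intro: finite_subset)
  ultimately have "S \<inter> T \<noteq> {}"
    using assms(1,3) card_Un_disjoint[of S T] by fastforce
  then show thesis
    using that by (auto simp: T_def)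
qed

lemma le_of_stepwise_antimono:
  fixes \<theta> :: "nat \<Rightarrow> 'a::order"
  assumes "\<And>l. l + 1 < n \<Longrightarrow> \<theta> (l + 1) \<le> \<theta> l" "l \<le> l'" "l' < n"
  shows "\<theta> l' \<le> \<theta> l"
  using assms(2,3)
proof (induction l' rule: dec_induct)
  case base
  show ?case by simp
next
  case (step m)
  then show ?case
    using assms(1)[of m] by simp
qed

lemma sorted_desc_nth_le_if_dominated:
  fixes f \<theta> :: "nat \<Rightarrow> real"
  assumes \<sigma>: "inj_on \<sigma> {..<n}" "\<sigma> ` {..<n} \<subseteq> {..<n}"
    and dom: "\<And>l. l < n \<Longrightarrow> f (\<sigma> l) \<le> \<theta> l"
    and anti: "\<And>l. l + 1 < n \<Longrightarrow> \<theta> (l + 1) \<le> \<theta> l"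
    and "l < n"
  shows "sorted_desc n f ! l \<le> \<theta> l"
proof -
  have "inj_on \<sigma> {l..<n}"
    using \<sigma>(1) by (rule inj_on_subset) auto
  then have "n - l \<le> card (\<sigma> ` {l..<n})"
    by (simp add: card_image)
  moreover have "\<sigma> ` {l..<n} \<subseteq> {..<n}"
    using \<sigma>(2) by (auto simp: image_subset_iff)
  ultimately obtain i where "i \<in> \<sigma> ` {l..<n}" "sorted_desc n f ! l \<le> f i"
    using sorted_desc_nth_le_if_card_ge[OF \<open>l < n\<close>] by blast
  then obtain l' where "l \<le> l'" "l' < n" "sorted_desc n f ! l \<le> f (\<sigma> l')"
    by auto
  moreover have "\<theta> l' \<le> \<theta> l"
    using le_of_stepwise_antimono[of n \<theta>] anti \<open>l \<le> l'\<close> \<open>l' < n\<close> by blast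
  ultimately show ?thesis
    using dom[of l'] by linarith
qed

lemma tau_norm_nonneg: "0 \<le> tau_norm \<tau> y"
  by (simp add: tau_norm_def)

lemma power_cone_iff_powr:
  fixes v \<zeta> u :: real
  assumes "0 \<le> v" "0 \<le> \<zeta>" "0 < u" "1 \<le> s" "s \<le> r"
  shows "v ^ r \<le> \<zeta> ^ s * u ^ (r - s) \<longleftrightarrow> v powr (r / s) \<le> \<zeta> * u powr (r / s - 1)"
proof -
  have "(v powr (r / s)) ^ s = v ^ r"
    using assms by (cases "v = 0") (auto simp: powr_power powr_realpow' power_0_left)
  moreover have "(\<zeta> * u powr (r / s - 1)) ^ s = \<zeta> ^ s * u ^ (r - s)"
  proof -
    have "real s * (r / s - 1) = real (r - s)"
      using assms(4,5) by (simp add: of_nat_diff field_simps)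
    then show ?thesis
      using assms(3) by (simp add: power_mult_distrib powr_power powr_realpow)
  qed
  ultimately show ?thesis
    using assms power_mono_iff[of "v powr (r / s)" "\<zeta> * u powr (r / s - 1)" s] by simp
qed

lemma tau_norm_le_if_power_cone:
  fixes y v \<zeta> :: "real^'d"
  assumes \<tau>: "\<tau> = real r / real s" "1 \<le> s" "s \<le> r" and "0 \<le> u"
    and v: "\<And>k. \<bar>y $ k\<bar> \<le> v $ k" and \<zeta>: "\<And>k. 0 \<le> \<zeta> $ k"
    and cone: "\<And>k. (v $ k) ^ r \<le> (\<zeta> $ k) ^ s * u ^ (r - s)"
    and sum: "(\<Sum>k\<in>UNIV. \<zeta> $ k) \<le> u"
  shows "tau_norm \<tau> y \<le> u"
proof (cases "u = 0")
  case True
  then have "\<zeta> $ k = 0" for k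
    using sum \<zeta> sum_nonneg_eq_0_iff[of UNIV "\<lambda>k. \<zeta> $ k"] by (simp add: antisym sum_nonneg)
  then have "v $ k \<le> 0" for k
    using cone[of k] True \<tau>(2) by (metis linorder_not_le mult_zero_left power_0_left
        zero_less_power not_one_le_zero)
  then have "y $ k = 0" for k
    using v[of k] by (meson abs_ge_zero abs_le_zero_iff order_trans)
  then show ?thesis
    using True by (simp add: tau_norm_def)
next
  case False
  with \<open>0 \<le> u\<close> have "0 < u" by simp
  have "0 < \<tau>"
    using \<tau> by simp
  have "\<bar>y $ k\<bar> powr \<tau> \<le> \<zeta> $ k * u powr (\<tau> - 1)" for k
  proof -
    have "0 \<le> v $ k"
      using v[of k] by (meson abs_ge_zero order_trans)
    then have "v $ k powr \<tau> \<le> \<zeta> $ k * u powr (\<tau> - 1)"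
      using power_cone_iff_powr[of "v $ k" "\<zeta> $ k" u s r] cone \<zeta> \<open>0 < u\<close> \<tau> by simp
    then show ?thesis
      using v[of k] \<open>0 < \<tau>\<close> powr_mono2[of \<tau> "\<bar>y $ k\<bar>" "v $ k"] by simp
  qed
  then have "(\<Sum>k\<in>UNIV. \<bar>y $ k\<bar> powr \<tau>) \<le> (\<Sum>k\<in>UNIV. \<zeta> $ k) * u powr (\<tau> - 1)"
    by (simp add: sum_distrib_right sum_mono)
  also have "\<dots> \<le> u * u powr (\<tau> - 1)"
    using sum by (simp add: mult_right_mono)
  also have "\<dots> = u powr \<tau>"
    using \<open>0 < u\<close> by (simp add: powr_diff)
  finally have "tau_norm \<tau> y \<le> (u powr \<tau>) powr (1 / \<tau>)"
    unfolding tau_norm_def using \<open>0 < \<tau>\<close> by (intro powr_mono2) (auto intro: sum_nonneg)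
  also have "\<dots> = u"
    using \<open>0 < \<tau>\<close> \<open>0 < u\<close> by (simp add: powr_powr)
  finally show ?thesis .
qed

definition power_cone_witness :: "real \<Rightarrow> real^'d \<Rightarrow> real^'d" where
  "power_cone_witness \<tau> y = (\<chi> k. \<bar>y $ k\<bar> powr \<tau> / tau_norm \<tau> y powr (\<tau> - 1))"

lemma power_cone_witness:
  fixes y :: "real^'d"
  assumes \<tau>: "\<tau> = real r / real s" "1 \<le> s" "s \<le> r"
  defines "\<zeta> \<equiv> power_cone_witness \<tau> y"
  shows "0 \<le> \<zeta> $ k"
    and "\<bar>y $ k\<bar> ^ r \<le> (\<zeta> $ k) ^ s * tau_norm \<tau> y ^ (r - s)"
    and "(\<Sum>k\<in>UNIV. \<zeta> $ k) \<le> tau_norm \<tau> y"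
proof -
  have "0 < \<tau>"
    using \<tau> by simp
  show \<zeta>_nonneg: "0 \<le> \<zeta> $ k" for k
    by (simp add: \<zeta>_def power_cone_witness_def)
  have y_zero: "y $ k = 0" if "tau_norm \<tau> y = 0" for k
    using that \<open>0 < \<tau>\<close> by (simp add: tau_norm_def sum_nonneg_eq_0_iff)
  have \<zeta>_scaled: "\<zeta> $ k * tau_norm \<tau> y powr (\<tau> - 1) = \<bar>y $ k\<bar> powr \<tau>"
    if "0 < tau_norm \<tau> y" for k
    using that by (simp add: \<zeta>_def power_cone_witness_def)
  show "\<bar>y $ k\<bar> ^ r \<le> (\<zeta> $ k) ^ s * tau_norm \<tau> y ^ (r - s)"
  proof (cases "tau_norm \<tau> y = 0")
    case True
    then show ?thesis
      using y_zero \<zeta>_nonneg \<tau>(2,3) by (simp add: power_0_left)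
  next
    case False
    then have "0 < tau_norm \<tau> y"
      using tau_norm_nonneg[of \<tau> y] by linarith
    then show ?thesis
      using power_cone_iff_powr[of "\<bar>y $ k\<bar>" "\<zeta> $ k" "tau_norm \<tau> y" s r] \<zeta>_scaled \<tau>
      by (simp add: \<zeta>_def power_cone_witness_def)
  qed
  show "(\<Sum>k\<in>UNIV. \<zeta> $ k) \<le> tau_norm \<tau> y"
  proof (cases "tau_norm \<tau> y = 0")
    case True
    then show ?thesis
      using y_zero \<open>0 < \<tau>\<close> by (simp add: \<zeta>_def power_cone_witness_def)
  next
    case False
    then have "0 < tau_norm \<tau> y"
      using tau_norm_nonneg[of \<tau> y] by linarith
    have "(\<Sum>k\<in>UNIV. \<zeta> $ k) = tau_norm \<tau> y powr \<tau> / tau_norm \<tau> y powr (\<tau> - 1)"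
      using \<open>0 < \<tau>\<close> by (simp add: \<zeta>_def power_cone_witness_def tau_norm_def
          sum_divide_distrib powr_powr sum_nonneg)
    also have "\<dots> = tau_norm \<tau> y"
      using \<open>0 < tau_norm \<tau> y\<close> by (simp add: powr_diff)
    finally show ?thesis
      by simp
  qed
qed

lemma f_tilde_eq_Min_image: "f_tilde \<tau> p a x i = Min ((\<lambda>j. tau_norm \<tau> (x j - a i)) ` {..<p})"
  unfolding f_tilde_def by (intro arg_cong[where f=Min]) auto

lemma f_tilde_le: "j < p \<Longrightarrow> f_tilde \<tau> p a x i \<le> tau_norm \<tau> (x j - a i)"
  unfolding f_tilde_eq_Min_image by (intro Min_le) auto

lemma f_tilde_attained: "0 < p \<Longrightarrow> \<exists>j<p. f_tilde \<tau> p a x i = tau_norm \<tau> (x j - a i)"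
proof -
  assume "0 < p"
  then have "f_tilde \<tau> p a x i \<in> (\<lambda>j. tau_norm \<tau> (x j - a i)) ` {..<p}"
    unfolding f_tilde_eq_Min_image by (intro Min_in) auto
  then show ?thesis
    by auto
qed

lemma f_tilde_nonneg: "0 < p \<Longrightarrow> 0 \<le> f_tilde \<tau> p a x i"
  using f_tilde_attained[of p \<tau> a x i] tau_norm_nonneg by metis

lemma ex_eq_1_if_sum_01_eq_1:
  fixes f :: "'a \<Rightarrow> real"
  assumes "\<And>x. x \<in> A \<Longrightarrow> f x \<in> {0, 1}" "sum f A = 1"
  shows "\<exists>x\<in>A. f x = 1"
proof (rule ccontr)
  assume "\<not> ?thesis"
  with assms(1) have "sum f A = 0"
    by (metis insertE singletonD sum.neutral)
  with assms(2) show False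
    by simp
qed

lemma zero_one_doubly_stochastic_assignment:
  fixes w :: "nat \<Rightarrow> nat \<Rightarrow> real"
  assumes w01: "\<And>i l. i < n \<Longrightarrow> l < n \<Longrightarrow> w i l \<in> {0, 1}"
    and col: "\<And>l. l < n \<Longrightarrow> (\<Sum>i<n. w i l) = 1"
    and row: "\<And>i. i < n \<Longrightarrow> (\<Sum>l<n. w i l) = 1"
  obtains \<sigma> where "inj_on \<sigma> {..<n}" "\<sigma> ` {..<n} \<subseteq> {..<n}" "\<And>l. l < n \<Longrightarrow> w (\<sigma> l) l = 1"
proof -
  have "\<exists>i<n. w i l = 1" if "l < n" for l
    using ex_eq_1_if_sum_01_eq_1[of "{..<n}" "\<lambda>i. w i l"] w01 col that by auto
  then obtain \<sigma> where \<sigma>: "\<And>l. l < n \<Longrightarrow> \<sigma> l < n \<and> w (\<sigma> l) l = 1"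
    by metis
  have "inj_on \<sigma> {..<n}"
  proof (rule inj_onI, rule ccontr)
    fix l1 l2
    assume l: "l1 \<in> {..<n}" "l2 \<in> {..<n}" "\<sigma> l1 = \<sigma> l2" "l1 \<noteq> l2"
    define i where "i = \<sigma> l1"
    have i: "i < n" "w i l1 = 1" "w i l2 = 1"
      using \<sigma>[of l1] \<sigma>[of l2] l unfolding i_def by auto
    have "2 = (\<Sum>l\<in>{l1, l2}. w i l)"
      using i l(4) by simp
    also have "\<dots> \<le> (\<Sum>l<n. w i l)"
      using l w01[OF i(1)] by (intro sum_mono2) force+
    also have "\<dots> = 1"
      using row[OF i(1)] .
    finally show False
      by simp
  qed
  with \<sigma> show thesis
    by (intro that) auto
qed

lemma mfomp_feasibleD:
  assumes "mfomp_feasible W r s n p a UB K x z u v \<zeta> w t \<theta>"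
  shows "j < p \<Longrightarrow> x j \<in> K"
    and "l < n \<Longrightarrow> 0 \<le> \<theta> l"
    and "i < n \<Longrightarrow> j < p \<Longrightarrow> 0 \<le> u i j"
    and "i < n \<Longrightarrow> j < p \<Longrightarrow> 0 \<le> \<zeta> i j $ k"
    and "i < n \<Longrightarrow> l < n \<Longrightarrow> w i l \<in> W"
    and "i < n \<Longrightarrow> j < p \<Longrightarrow> z i j \<in> W"
    and "i < n \<Longrightarrow> l < n \<Longrightarrow> t i \<le> \<theta> l + UB i * (1 - w i l)"
    and "l + 1 < n \<Longrightarrow> \<theta> (l + 1) \<le> \<theta> l"
    and "i < n \<Longrightarrow> j < p \<Longrightarrow> u i j \<le> t i + UB i * (1 - z i j)"
    and "i < n \<Longrightarrow> j < p \<Longrightarrow> (v i j $ k) ^ r \<le> (\<zeta> i j $ k) ^ s * u i j ^ (r - s)"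
    and "i < n \<Longrightarrow> j < p \<Longrightarrow> (\<Sum>k\<in>UNIV. \<zeta> i j $ k) \<le> u i j"
    and "i < n \<Longrightarrow> (\<Sum>j<p. z i j) = 1"
    and "l < n \<Longrightarrow> (\<Sum>i<n. w i l) = 1"
    and "i < n \<Longrightarrow> (\<Sum>l<n. w i l) = 1"
  using assms unfolding mfomp_feasible_def by simp_all

lemma abs_le_if_mfomp_feasible:
  assumes "mfomp_feasible W r s n p a UB K x z u v \<zeta> w t \<theta>" "i < n" "j < p"
  shows "\<bar>(x j - a i) $ k\<bar> \<le> v i j $ k"
proof -
  have "0 \<le> v i j $ k - x j $ k + a i $ k" "0 \<le> v i j $ k + x j $ k - a i $ k"
    using assms unfolding mfomp_feasible_def by blast+
  then show ?thesis
    by (simp add: abs_le_iff)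
qed

lemma locomf_feasible_if_mfomp_feasible:
  "mfomp_feasible W r s n p a UB K x z u v \<zeta> w t \<theta> \<Longrightarrow> locomf_feasible p K x"
  by (simp add: locomf_feasible_def mfomp_feasibleD(1))

lemma permutation_matrix_sums:
  fixes q :: "nat \<Rightarrow> nat"
  assumes "q permutes {..<n}"
  shows "l < n \<Longrightarrow> (\<Sum>i<n. if i = q l then 1 else 0 :: 'a::semiring_1) = 1"
    and "i < n \<Longrightarrow> (\<Sum>l<n. if i = q l then 1 else 0 :: 'a::semiring_1) = 1"
proof -
  show "(\<Sum>i<n. if i = q l then 1 else 0 :: 'a) = 1" if "l < n"
    using permutes_in_image[OF assms] that by simp
  have "i = q l \<longleftrightarrow> l = inv q i" for l
    using permutes_inv_eq[OF assms, of i l] by auto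
  then show "(\<Sum>l<n. if i = q l then 1 else 0 :: 'a) = 1" if "i < n"
    using permutes_in_image[OF permutes_inv[OF assms]] that by simp
qed

lemma mfomp_feasible_lift:
  fixes a x :: "nat \<Rightarrow> real^'d"
  assumes \<tau>: "\<tau> = real r / real s" "1 \<le> s" "s \<le> r" and "0 < p"
    and UB: "\<And>i y. i < n \<Longrightarrow> y \<in> K \<Longrightarrow> tau_norm \<tau> (y - a i) \<le> UB i"
    and x: "locomf_feasible p K x"
  shows "\<exists>z u v \<zeta> w t \<theta>. mfomp_feasible {0,1} r s n p a UB K x z u v \<zeta> w t \<theta> \<and>
            (\<Sum>l<n. lam l * \<theta> l) = locomf_obj \<tau> n p lam a x"
proof -
  have xK: "\<forall>j<p. x j \<in> K"
    using x by (simp add: locomf_feasible_def)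
  define f where "f = f_tilde \<tau> p a x"
  obtain J where J: "\<And>i. J i < p \<and> f i = tau_norm \<tau> (x (J i) - a i)"
    using f_tilde_attained[OF \<open>0 < p\<close>, of \<tau> a x] unfolding f_def by metis
  obtain q where q: "q permutes {..<n}" "\<And>l. l < n \<Longrightarrow> sorted_desc n f ! l = f (q l)"
    using sorted_desc_permutes by blast
  define z where "z i j = (if j = J i then 1 else 0 :: real)" for i j
  define u where "u i j = tau_norm \<tau> (x j - a i)" for i j
  define v :: "nat \<Rightarrow> nat \<Rightarrow> real^'d" where "v i j = (\<chi> k. \<bar>(x j - a i) $ k\<bar>)" for i j
  define \<zeta> where "\<zeta> i j = power_cone_witness \<tau> (x j - a i)" for i j
  define w where "w i l = (if i = q l then 1 else 0 :: real)" for i l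
  define \<theta> where "\<theta> l = sorted_desc n f ! l" for l
  have f_nonneg: "0 \<le> f i" for i
    using f_tilde_nonneg[OF \<open>0 < p\<close>] by (simp add: f_def)
  have f_le_UB: "f i \<le> UB i" if "i < n" for i
    using f_tilde_le[OF \<open>0 < p\<close>] UB[OF that] xK \<open>0 < p\<close> order_trans unfolding f_def by blast
  have "f i \<le> \<theta> l + UB i * (1 - w i l)" if "i < n" "l < n" for i l
    using q(2)[of l] f_le_UB[of i] f_nonneg[of "q l"] that by (auto simp: \<theta>_def w_def)
  moreover have "u i j \<le> f i + UB i * (1 - z i j)" if "i < n" "j < p" for i j
    using J[of i] UB[of i "x j"] xK f_nonneg[of i] that by (auto simp: u_def z_def)
  moreover have "0 \<le> \<theta> l" if "l < n" for l
    using q(2)[OF that] f_nonneg by (simp add: \<theta>_def)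
  moreover have "0 \<le> v i j $ k" "0 \<le> v i j $ k - x j $ k + a i $ k"
    "0 \<le> v i j $ k + x j $ k - a i $ k" for i j k
    by (simp_all add: v_def abs_if)
  moreover have "0 \<le> \<zeta> i j $ k" "(v i j $ k) ^ r \<le> (\<zeta> i j $ k) ^ s * u i j ^ (r - s)"
    "(\<Sum>k\<in>UNIV. \<zeta> i j $ k) \<le> u i j" for i j k
    using power_cone_witness[OF \<tau>, of "x j - a i"] by (simp_all add: v_def \<zeta>_def u_def)
  ultimately have "mfomp_feasible {0,1} r s n p a UB K x z u v \<zeta> w f \<theta>"
    unfolding mfomp_feasible_def
    using xK f_nonneg J permutation_matrix_sums[OF q(1)] permutes_in_image[OF q(1)]
      sorted_desc_nth_antimono
    by (auto simp: z_def w_def u_def \<theta>_def tau_norm_nonneg)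
  moreover have "(\<Sum>l<n. lam l * \<theta> l) = locomf_obj \<tau> n p lam a x"
    by (simp add: locomf_obj_def \<theta>_def f_def)
  ultimately show ?thesis
    by blast
qed

lemma f_tilde_le_if_mfomp_feasible:
  assumes \<tau>: "\<tau> = real r / real s" "1 \<le> s" "s \<le> r"
    and F: "mfomp_feasible {0,1} r s n p a UB K x z u v \<zeta> w t \<theta>" and "i < n"
  shows "f_tilde \<tau> p a x i \<le> t i"
proof -
  obtain j where "j < p" "z i j = 1"
    using ex_eq_1_if_sum_01_eq_1[of "{..<p}" "z i"] mfomp_feasibleD(6,12)[OF F \<open>i < n\<close>] by auto
  moreover have "tau_norm \<tau> (x j - a i) \<le> u i j"
    using tau_norm_le_if_power_cone[OF \<tau>, where u="u i j" and y="x j - a i" and v="v i j"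
        and \<zeta>="\<zeta> i j"] abs_le_if_mfomp_feasible[OF F] mfomp_feasibleD(3,4,10,11)[OF F]
      \<open>i < n\<close> \<open>j < p\<close>
    by blast
  ultimately show ?thesis
    using f_tilde_le[OF \<open>j < p\<close>, of \<tau> a x i] mfomp_feasibleD(9)[OF F \<open>i < n\<close> \<open>j < p\<close>] by simp
qed

lemma locomf_obj_le_if_mfomp_feasible:
  assumes \<tau>: "\<tau> = real r / real s" "1 \<le> s" "s \<le> r"
    and lam: "\<And>l. l < n \<Longrightarrow> 0 \<le> lam l"
    and F: "mfomp_feasible {0,1} r s n p a UB K x z u v \<zeta> w t \<theta>"
  shows "locomf_obj \<tau> n p lam a x \<le> (\<Sum>l<n. lam l * \<theta> l)"
proof -
  obtain \<sigma> where \<sigma>: "inj_on \<sigma> {..<n}" "\<sigma> ` {..<n} \<subseteq> {..<n}" "\<And>l. l < n \<Longrightarrow> w (\<sigma> l) l = 1"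
    using zero_one_doubly_stochastic_assignment[of n w] mfomp_feasibleD(5,13,14)[OF F] by blast
  have "f_tilde \<tau> p a x (\<sigma> l) \<le> \<theta> l" if "l < n" for l
  proof -
    have "\<sigma> l < n"
      using \<sigma>(2) that by auto
    then have "t (\<sigma> l) \<le> \<theta> l"
      using mfomp_feasibleD(7)[OF F \<open>\<sigma> l < n\<close> that] \<sigma>(3)[OF that] by simp
    then show ?thesis
      using f_tilde_le_if_mfomp_feasible[OF \<tau> F \<open>\<sigma> l < n\<close>] by linarith
  qed
  then have "sorted_desc n (f_tilde \<tau> p a x) ! l \<le> \<theta> l" if "l < n" for l
    using sorted_desc_nth_le_if_dominated[OF \<sigma>(1,2)] mfomp_feasibleD(8)[OF F] that by blast
  then show ?thesis
    unfolding locomf_obj_def using lam by (intro sum_mono mult_left_mono) auto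
qed

lemma cInf_eq_if_dominated:
  fixes A B :: "'a::conditionally_complete_lattice set"
  assumes "A \<subseteq> B" and dom: "\<And>b. b \<in> B \<Longrightarrow> \<exists>a\<in>A. a \<le> b" and "bdd_below B"
  shows "Inf A = Inf B"
proof (cases "A = {}")
  case True
  with dom have "B = {}"
    by blast
  with True show ?thesis
    by simp
next
  case False
  have "bdd_below A"
    using \<open>bdd_below B\<close> \<open>A \<subseteq> B\<close> by (rule bdd_below_mono)
  have "Inf A \<le> Inf B"
  proof (rule cInf_greatest)
    show "B \<noteq> {}"
      using False \<open>A \<subseteq> B\<close> by blast
    show "Inf A \<le> b" if "b \<in> B" for b
      using dom[OF that] cInf_lower[OF _ \<open>bdd_below A\<close>] order_trans by blast
  qed
  moreover have "Inf B \<le> Inf A"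
    using cInf_superset_mono[OF False \<open>bdd_below B\<close> \<open>A \<subseteq> B\<close>] .
  ultimately show ?thesis
    by (rule antisym)
qed

lemma rho_eq_rho_hat:
  fixes a :: "nat \<Rightarrow> real^'d"
  assumes \<tau>: "\<tau> = real r / real s" "1 \<le> s" "s \<le> r" and "0 < p"
    and lam: "\<And>l. l < n \<Longrightarrow> 0 \<le> lam l"
    and UB: "\<And>i y. i < n \<Longrightarrow> y \<in> K \<Longrightarrow> tau_norm \<tau> (y - a i) \<le> UB i"
  shows "rho \<tau> n p lam a K = rho_hat r s n p lam a UB K"
proof -
  let ?A = "{locomf_obj \<tau> n p lam a x |x. locomf_feasible p K x}"
  let ?B = "{\<Sum>l<n. lam l * \<theta> l |x z u v \<zeta> w t \<theta>. mfomp_feasible {0, 1} r s n p a UB K x z u v \<zeta> w t \<theta>}"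
  have "?A \<subseteq> ?B"
  proof
    fix c
    assume "c \<in> ?A"
    then obtain x where "locomf_feasible p K x" "c = locomf_obj \<tau> n p lam a x"
      by blast
    then obtain z u v \<zeta> w t \<theta> where "mfomp_feasible {0, 1} r s n p a UB K x z u v \<zeta> w t \<theta>"
      "c = (\<Sum>l<n. lam l * \<theta> l)"
      using mfomp_feasible_lift[OF \<tau> \<open>0 < p\<close>, where n=n and K=K and a=a and UB=UB and x=x
          and lam=lam] UB by auto
    then show "c \<in> ?B"
      by blast
  qed
  moreover have "\<exists>c\<in>?A. c \<le> b" if "b \<in> ?B" for b
  proof -
    obtain x z u v \<zeta> w t \<theta> where F: "mfomp_feasible {0, 1} r s n p a UB K x z u v \<zeta> w t \<theta>"
      and "b = (\<Sum>l<n. lam l * \<theta> l)"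
      using \<open>b \<in> ?B\<close> by blast
    then have "locomf_obj \<tau> n p lam a x \<le> b"
      using locomf_obj_le_if_mfomp_feasible[OF \<tau> lam F] by simp
    with locomf_feasible_if_mfomp_feasible[OF F] show ?thesis
      by blast
  qed
  moreover have "bdd_below ?B"
  proof (rule bdd_belowI)
    fix b
    assume "b \<in> ?B"
    then obtain x z u v \<zeta> w t \<theta> where "b = (\<Sum>l<n. lam l * \<theta> l)"
      and "mfomp_feasible {0, 1} r s n p a UB K x z u v \<zeta> w t \<theta>"
      by blast
    with lam show "0 \<le> b"
      by (auto intro!: sum_nonneg dest: mfomp_feasibleD(2))
  qed
  ultimately show ?thesis
    unfolding rho_def rho_hat_def by (rule cInf_eq_if_dominated)
qed

lemma power_cone_strict_point:
  fixes v :: "real^'d"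
  assumes v: "\<And>k. 0 < v $ k" and "1 \<le> s" "s \<le> r"
  obtains u and \<zeta> :: "real^'d" where "0 < u" "\<And>k. 0 < \<zeta> $ k"
    "\<And>k. (v $ k) ^ r < (\<zeta> $ k) ^ s * u ^ (r - s)" "(\<Sum>k\<in>UNIV. \<zeta> $ k) < u"
proof -
  define c where "c = (\<Sum>k\<in>UNIV. v $ k) + 1"
  define u where "u = 2 * real CARD('d) * c"
  have v_lt_c: "v $ k < c" for k
    using member_le_sum[of k UNIV "\<lambda>k. v $ k"] v by (simp add: c_def less_imp_le)
  then have "0 < c"
    using v by (meson less_trans)
  have "0 < CARD('d)"
    by (rule finite_UNIV_card_ge_0) simp
  then have "1 \<le> real CARD('d)"
    by linarith
  have "1 * c \<le> (2 * real CARD('d)) * c"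
    using \<open>0 < c\<close> \<open>1 \<le> real CARD('d)\<close> by (intro mult_right_mono; linarith)
  then have "c \<le> u"
    by (simp add: u_def)
  have "0 < u"
    using \<open>0 < c\<close> by (simp add: u_def)
  have "(v $ k) ^ r = (v $ k) ^ s * (v $ k) ^ (r - s)" for k
    using \<open>s \<le> r\<close> by (simp add: power_add[symmetric])
  also have "\<dots> k < c ^ s * u ^ (r - s)" for k
    using v[of k] v_lt_c[of k] \<open>c \<le> u\<close> \<open>1 \<le> s\<close>
    by (intro mult_less_le_imp_less power_strict_mono power_mono) auto
  finally have "(v $ k) ^ r < c ^ s * u ^ (r - s)" for k .
  moreover have "(\<Sum>k\<in>(UNIV :: 'd set). c) < u"
    using mult_pos_pos[of "real CARD('d)" c] \<open>0 < c\<close> \<open>1 \<le> real CARD('d)\<close> by (simp add: u_def)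
  ultimately show thesis
    using \<open>0 < c\<close> \<open>0 < u\<close> by (intro that[of u "\<chi> k. c"]) auto
qed

lemma mfomp_feasible_if_relax_strict:
  "mfomp_relax_strict m g r s n p a UB x z u v \<zeta> w t \<theta> \<Longrightarrow>
    mfomp_feasible {0..1} r s n p a UB (semialg_set m g) x z u v \<zeta> w t \<theta>"
  unfolding mfomp_relax_strict_def mfomp_feasible_def semialg_set_def
  by (auto simp: less_imp_le)

text \<open>All facilities sit at the strictly feasible point \<open>y\<close> and all assignments are
  uniform; the variables \<open>t\<close> and \<open>\<theta>\<close> are chosen large enough, \<open>\<theta>\<close> strictly decreasing,
  so that every big-M constraint has slack regardless of \<open>UB \<ge> 0\<close>.\<close>
lemma mfomp_relax_strict_exists:
  fixes a :: "nat \<Rightarrow> real^'d" and y :: "real^'d"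
  assumes "0 < n" "0 < p" "1 \<le> s" "s \<le> r"
    and y: "\<And>k. k < m \<Longrightarrow> 0 < g k y" and UB: "\<And>i. i < n \<Longrightarrow> 0 \<le> UB i"
  shows "\<exists>x z u v \<zeta> w t \<theta>. mfomp_relax_strict m g r s n p a UB x z u v \<zeta> w t \<theta>"
proof -
  define v :: "nat \<Rightarrow> nat \<Rightarrow> real^'d" where "v i j = (\<chi> k. \<bar>y $ k - a i $ k\<bar> + 1)" for i j
  have "\<forall>i. \<exists>U \<zeta>'. 0 < U \<and> (\<forall>k. 0 < \<zeta>' $ k) \<and> (\<forall>k. (v i 0 $ k) ^ r < (\<zeta>' $ k) ^ s * U ^ (r - s))
      \<and> (\<Sum>k\<in>UNIV. \<zeta>' $ k) < U"
    using power_cone_strict_point[of "v _ 0" s r] \<open>1 \<le> s\<close> \<open>s \<le> r\<close>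
    by (metis (no_types, lifting) v_def vec_lambda_beta abs_ge_zero add_nonneg_pos zero_less_one)
  then obtain U \<zeta>' where U: "\<And>i. 0 < U i" "\<And>i k. 0 < \<zeta>' i $ k"
    "\<And>i k. (v i 0 $ k) ^ r < (\<zeta>' i $ k) ^ s * U i ^ (r - s)" "\<And>i. (\<Sum>k\<in>UNIV. \<zeta>' i $ k) < U i"
    by metis
  define t where "t i = U i + 1" for i
  define T where "T = (\<Sum>i<n. t i)"
  define \<theta> where "\<theta> l = T + real n - real l" for l
  have t_pos: "0 < t i" for i
    using U(1)[of i] by (simp add: t_def)
  have t_le_T: "t i \<le> T" if "i < n" for i
    unfolding T_def using t_pos that by (intro member_le_sum) (auto intro: less_imp_le)
  have "0 < T"
    using t_le_T[of 0] t_pos[of 0] \<open>0 < n\<close> by simp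
  have "0 \<le> UB i * (1 - 1 / real n)" "0 \<le> UB i * (1 - 1 / real p)" if "i < n" for i
    using UB[OF that] \<open>0 < n\<close> \<open>0 < p\<close> by (intro mult_nonneg_nonneg; simp add: divide_le_eq_1)+
  moreover have "t i < \<theta> l" if "i < n" "l < n" for i l
    using t_le_T[OF that(1)] that(2) by (simp add: \<theta>_def)
  ultimately have "t i < \<theta> l + UB i * (1 - 1 / real n)"
    and "U i < t i + UB i * (1 - 1 / real p)" if "i < n" "l < n" for i l
    using that by (fastforce simp: t_def)+
  moreover have "0 < \<theta> l" if "l < n" for l
    using \<open>0 < T\<close> that by (simp add: \<theta>_def)
  moreover have "\<theta> (l + 1) < \<theta> l" for l
    by (simp add: \<theta>_def)
  ultimately have "mfomp_relax_strict m g r s n p a UB (\<lambda>j. y) (\<lambda>i j. 1 / real p) (\<lambda>i j. U i) v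
      (\<lambda>i j. \<zeta>' i) (\<lambda>i l. 1 / real n) t \<theta>"
    unfolding mfomp_relax_strict_def
    using \<open>0 < n\<close> \<open>0 < p\<close> y U t_pos by (auto simp: v_def abs_if)
  then show ?thesis
    by blast
qed

lemma mfomp_relax_slater_point:
  fixes a :: "nat \<Rightarrow> real^'d" and y :: "real^'d"
  assumes "0 < n" "0 < p" "1 \<le> s" "s \<le> r" and y: "\<And>k. k < m \<Longrightarrow> 0 < g k y"
    and UB: "\<And>i y. i < n \<Longrightarrow> y \<in> semialg_set m g \<Longrightarrow> tau_norm \<tau> (y - a i) \<le> UB i"
  shows "\<exists>x z u v \<zeta> w t \<theta>. mfomp_feasible {0..1} r s n p a UB (semialg_set m g) x z u v \<zeta> w t \<theta> \<and>
    mfomp_relax_strict m g r s n p a UB x z u v \<zeta> w t \<theta>"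
proof -
  have "y \<in> semialg_set m g"
    using y by (simp add: semialg_set_def less_imp_le)
  then have "0 \<le> UB i" if "i < n" for i
    using UB[OF that] tau_norm_nonneg order_trans by blast
  then have "\<exists>x z u v \<zeta> w t \<theta>. mfomp_relax_strict m g r s n p a UB x z u v \<zeta> w t \<theta>"
    by (intro mfomp_relax_strict_exists) (use assms(1-4) y in auto)
  then obtain x z u v \<zeta> w t \<theta> where "mfomp_relax_strict m g r s n p a UB x z u v \<zeta> w t \<theta>"
    by blast
  with mfomp_feasible_if_relax_strict[OF this] show ?thesis
    by blast
qed

theorem theorem4p1:
  fixes n p m r s :: nat
    and a :: "nat \<Rightarrow> real^'d"
    and lam :: "nat \<Rightarrow> real"
    and g :: "nat \<Rightarrow> real^'d \<Rightarrow> real"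
    and UB :: "nat \<Rightarrow> real"
  defines "\<tau> \<equiv> real r / real s"
    and "K \<equiv> semialg_set m g"
  assumes "n \<ge> 1" and "p \<ge> 1"
    and "\<And>i. i < n \<Longrightarrow> lam i \<ge> 0"
    and "s \<ge> 1" and "r \<ge> s" and "coprime r s"
    and "\<And>k. k < m \<Longrightarrow> poly_fun (g k)"
    and "compact K"
    and "archimedean m g"
    and "\<And>i y. i < n \<Longrightarrow> y \<in> K \<Longrightarrow> tau_norm \<tau> (y - a i) \<le> UB i"
  shows
    "(\<forall>x. locomf_feasible p K x \<longrightarrow>
        (\<exists>z u v \<zeta> w t \<theta>. mfomp_feasible {0,1} r s n p a UB K x z u v \<zeta> w t \<theta> \<and>
            (\<Sum>l<n. lam l * \<theta> l) = locomf_obj \<tau> n p lam a x))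
     \<and> (\<forall>x z u v \<zeta> w t \<theta>. mfomp_feasible {0,1} r s n p a UB K x z u v \<zeta> w t \<theta> \<longrightarrow>
          locomf_feasible p K x)
     \<and> rho \<tau> n p lam a K = rho_hat r s n p lam a UB K
     \<and> ((\<exists>y. \<forall>k<m. g k y > 0) \<longrightarrow>
          (\<exists>x z u v \<zeta> w t \<theta>. mfomp_feasible {0..1} r s n p a UB K x z u v \<zeta> w t \<theta> \<and>
              mfomp_relax_strict m g r s n p a UB x z u v \<zeta> w t \<theta>))"
proof (intro conjI allI impI)
  have \<tau>: "\<tau> = real r / real s" "1 \<le> s" "s \<le> r"
    using \<open>s \<ge> 1\<close> \<open>r \<ge> s\<close> by (simp_all add: \<tau>_def)
  have "0 < n" "0 < p"
    using \<open>n \<ge> 1\<close> \<open>p \<ge> 1\<close> by simp_all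
  note UB = \<open>\<And>i y. i < n \<Longrightarrow> y \<in> K \<Longrightarrow> tau_norm \<tau> (y - a i) \<le> UB i\<close>
  show "\<exists>z u v \<zeta> w t \<theta>. mfomp_feasible {0,1} r s n p a UB K x z u v \<zeta> w t \<theta> \<and>
      (\<Sum>l<n. lam l * \<theta> l) = locomf_obj \<tau> n p lam a x" if "locomf_feasible p K x" for x
    using mfomp_feasible_lift[OF \<tau> \<open>0 < p\<close>, where n=n and K=K and a=a and UB=UB and x=x
        and lam=lam] UB that by auto
  show "locomf_feasible p K x" if "mfomp_feasible {0,1} r s n p a UB K x z u v \<zeta> w t \<theta>"
    for x z u v \<zeta> w t \<theta>
    using that by (rule locomf_feasible_if_mfomp_feasible)
  show "rho \<tau> n p lam a K = rho_hat r s n p lam a UB K"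
    using rho_eq_rho_hat[OF \<tau> \<open>0 < p\<close>, where n=n and lam=lam and K=K and a=a and UB=UB]
      \<open>\<And>i. i < n \<Longrightarrow> lam i \<ge> 0\<close> UB by auto
  assume "\<exists>y. \<forall>k<m. g k y > 0"
  then obtain y where "\<And>k. k < m \<Longrightarrow> 0 < g k y"
    by blast
  then show "\<exists>x z u v \<zeta> w t \<theta>. mfomp_feasible {0..1} r s n p a UB K x z u v \<zeta> w t \<theta> \<and>
      mfomp_relax_strict m g r s n p a UB x z u v \<zeta> w t \<theta>"
    using mfomp_relax_slater_point[OF \<open>0 < n\<close> \<open>0 < p\<close> \<tau>(2,3), where a=a and UB=UB and \<tau>=\<tau>]
      UB unfolding K_def by blast
qed

end
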